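(* Let $s\ge1$, $p\in F_{2,2s}$, and $\alpha,\beta,\gamma,\delta\in\mathbb R$ with $\alpha\delta-\beta\gamma\ne0$. Let $q(x,y)=p(\alpha x+\beta y,\gamma x+\delta y)$. Then $S(H_q)=S(H_p)$.
   Context: $F_{2,2s}$ is the space of real binary forms of degree $2s$ in $x,y$. For $p(x,y)=\sum_{j=0}^{2s}\binom{2s}{j}a_jx^{2s-j}y^j\in F_{2,2s}$, the catalecticant of $p$ is the real quadratic form in $s+1$ variables $H_p(t_0,\dots,t_s)=\sum_{i=0}^s\sum_{j=0}^s a_{i+j}t_it_j$ (Hankel matrix $(a_{i+j})_{0\le i,j\le s}$). For a real quadratic form $H$, $S(H)$ denotes its signature: the pair (number of positive eigenvalues, number of negative eigenvalues) of its symmetric matrix. *)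

theory Defs
  imports Complex_Main "HOL-Computational_Algebra.Polynomial" "Jordan_Normal_Form.Char_Poly"
begin

definition binform :: "nat \<Rightarrow> (nat \<Rightarrow> real) \<Rightarrow> real \<Rightarrow> real \<Rightarrow> real" where
  "binform s a x y = (\<Sum>j=0..2*s. real (2*s choose j) * a j * x ^ (2*s - j) * y ^ j)"

definition catalecticant :: "nat \<Rightarrow> (nat \<Rightarrow> real) \<Rightarrow> real mat" where
  "catalecticant s a = mat (s+1) (s+1) (\<lambda>(i,j). a (i+j))"

definition num_pos_eig :: "real mat \<Rightarrow> nat" where
  "num_pos_eig A = (\<Sum>r\<in>{r. r > 0 \<and> poly (char_poly A) r = 0}. order r (char_poly A))"

definition num_neg_eig :: "real mat \<Rightarrow> nat" where
  "num_neg_eig A = (\<Sum>r\<in>{r. r < 0 \<and> poly (char_poly A) r = 0}. order r (char_poly A))"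

definition signature :: "real mat \<Rightarrow> nat \<times> nat" where
  "signature A = (num_pos_eig A, num_neg_eig A)"

end

theory Submission
  imports Defs
begin

text \<open>
  The proof shows that the catalecticants
  are congruent, \<open>H\<^sub>q = N H\<^sub>p N\<^sup>T\<close>, where row \<open>i\<close> of \<open>N\<close> holds the coefficients of
  \<open>(\<alpha> + d \<gamma>)\<^bsup>s-i\<^esup> (\<beta> + d \<delta>)\<^bsup>i\<^esup>\<close> as a polynomial in \<open>d\<close>.  The coefficients of \<open>q\<close> depend
  linearly on those of \<open>p\<close>, and testing this linear map on the pure powers
  \<open>(x + d y)\<^bsup>2s\<^esup>\<close> identifies it and yields the factorisation.  Applying the same
  argument to the inverse substitution gives a congruence in the other direction, and
  Sylvester's law of inertia (the number of eigenvalues of each sign can only drop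
  under a congruence \<open>P\<^sup>T A P\<close>) concludes.
\<close>

lemma mat_eq_by_mult_vec:
  fixes M N :: "'a :: comm_ring_1 mat"
  assumes M: "M \<in> carrier_mat n n" and N: "N \<in> carrier_mat n n"
    and eq: "\<And>x. x \<in> carrier_vec n \<Longrightarrow> M *\<^sub>v x = N *\<^sub>v x"
  shows "M = N"
proof (rule eq_matI)
  fix i j assume "i < dim_row N" "j < dim_col N"
  then have ij: "i < n" "j < n" using N by auto
  have "M $$ (i,j) = (M *\<^sub>v unit_vec n j) $ i" using M ij by simp
  also have "\<dots> = (N *\<^sub>v unit_vec n j) $ i" using eq[of "unit_vec n j"] by simp
  also have "\<dots> = N $$ (i,j)" using N ij by simp
  finally show "M $$ (i,j) = N $$ (i,j)" .
qed (use M N in auto)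

lemma nonzero_vec_entry:
  fixes v :: "'a :: zero vec"
  assumes "v \<in> carrier_vec n" "v \<noteq> 0\<^sub>v n"
  obtains i where "i < n" "v $ i \<noteq> 0"
  using assms by (metis eq_vecI carrier_vecD index_zero_vec)

text \<open>Over the reals conjugation is trivial, so the library facts on \<open>v \<bullet>c v\<close> apply
  to \<open>v \<bullet> v\<close>.\<close>
lemma real_conjugate_vec: "conjugate (v :: real vec) = v"
  by (rule eq_vecI) auto

lemma real_self_scalar_prod_eq_0:
  assumes "(v :: real vec) \<in> carrier_vec n"
  shows "v \<bullet> v = 0 \<longleftrightarrow> v = 0\<^sub>v n"
  using conjugate_square_eq_0_vec[OF assms] by (simp add: real_conjugate_vec)

lemma real_self_scalar_prod_ge_0: "(v :: real vec) \<bullet> v \<ge> 0"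
  using conjugate_square_ge_0_vec[of v] by (simp add: real_conjugate_vec)

lemma normalized_vec:
  fixes v :: "real vec"
  assumes v: "v \<in> carrier_vec n" "v \<noteq> 0\<^sub>v n"
  defines "u \<equiv> (1 / sqrt (v \<bullet> v)) \<cdot>\<^sub>v v"
  shows "u \<bullet> u = 1"
proof -
  have pos: "v \<bullet> v > 0"
    using real_self_scalar_prod_ge_0[of v] real_self_scalar_prod_eq_0[OF v(1)] v(2) by linarith
  have "u \<bullet> u = (1 / sqrt (v \<bullet> v))\<^sup>2 * (v \<bullet> v)"
    using v(1) by (simp add: u_def power2_eq_square)
  also have "\<dots> = 1" using pos by (simp add: power_divide)
  finally show ?thesis .
qed

lemma symmetric_entry:
  assumes "A \<in> carrier_mat n n" "A\<^sup>T = A" "i < n" "j < n"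
  shows "A $$ (i,j) = A $$ (j,i)"
  using assms by (metis carrier_matD index_transpose_mat(1))

text \<open>Real orthogonal matrices (\<open>U\<^sup>T U = 1\<close>); the name avoids the library notion
  \<open>orthogonal_mat\<close>, which only asks for orthogonal columns.\<close>
definition orthonormal_mat :: "nat \<Rightarrow> real mat \<Rightarrow> bool" where
  "orthonormal_mat n U \<longleftrightarrow> U \<in> carrier_mat n n \<and> U\<^sup>T * U = 1\<^sub>m n"

lemma orthonormal_matD:
  assumes "orthonormal_mat n U"
  shows "U \<in> carrier_mat n n" "U\<^sup>T * U = 1\<^sub>m n" "U * U\<^sup>T = 1\<^sub>m n"
  using assms mat_mult_left_right_inverse[of "U\<^sup>T" n U]
  unfolding orthonormal_mat_def by auto

lemma orthonormal_mat_vec: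
  assumes U: "orthonormal_mat n U" and x: "x \<in> carrier_vec n"
  shows "U\<^sup>T *\<^sub>v (U *\<^sub>v x) = x" "U *\<^sub>v (U\<^sup>T *\<^sub>v x) = x"
  using orthonormal_matD[OF U] x by (simp_all add: assoc_mult_mat_vec[symmetric, of _ n n _ n])

lemma orthonormal_mat_one: "orthonormal_mat n (1\<^sub>m n)"
  unfolding orthonormal_mat_def by simp

lemma orthonormal_mat_mult:
  assumes U: "orthonormal_mat n U" and V: "orthonormal_mat n V"
  shows "orthonormal_mat n (U * V)"
proof -
  note UV = orthonormal_matD[OF U] orthonormal_matD[OF V]
  have "(U * V)\<^sup>T * (U * V) = V\<^sup>T * (U\<^sup>T * (U * V))"
    using UV by (simp add: transpose_mult[of U n n V n] assoc_mult_mat[of "V\<^sup>T" n n "U\<^sup>T" n "U * V" n])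
  also have "U\<^sup>T * (U * V) = (U\<^sup>T * U) * V"
    using UV by (intro assoc_mult_mat[symmetric, of _ n n _ n _ n]) auto
  also have "V\<^sup>T * ((U\<^sup>T * U) * V) = 1\<^sub>m n" using UV by simp
  finally show ?thesis using UV unfolding orthonormal_mat_def by simp
qed

lemma congruence_symmetric:
  fixes A M :: "real mat"
  assumes A: "A \<in> carrier_mat n n" "A\<^sup>T = A" and M: "M \<in> carrier_mat n n"
  shows "(M\<^sup>T * A * M)\<^sup>T = M\<^sup>T * A * M"
proof -
  have "(M\<^sup>T * A * M)\<^sup>T = M\<^sup>T * (M\<^sup>T * A)\<^sup>T"
    using assms by (intro transpose_mult[of _ n n]) auto
  also have "\<dots> = M\<^sup>T * (A * M)"
    using assms by (simp add: transpose_mult[of _ n n _ n])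
  finally show ?thesis using assms by (simp add: assoc_mult_mat[of _ n n _ n _ n])
qed

lemma congruence_mult:
  fixes A U H :: "real mat"
  assumes A: "A \<in> carrier_mat n n" and U: "U \<in> carrier_mat n n" and H: "H \<in> carrier_mat n n"
  shows "(U * H)\<^sup>T * A * (U * H) = H\<^sup>T * (U\<^sup>T * A * U) * H"
proof (rule mat_eq_by_mult_vec[of _ n])
  fix x :: "real vec" assume x: "x \<in> carrier_vec n"
  have [simp]: "U\<^sup>T \<in> carrier_mat n n" "H\<^sup>T \<in> carrier_mat n n" using U H by auto
  show "((U * H)\<^sup>T * A * (U * H)) *\<^sub>v x = (H\<^sup>T * (U\<^sup>T * A * U) * H) *\<^sub>v x"
    using assms x by (simp add: transpose_mult[OF U H] assoc_mult_mat_vec[of _ n n _ n])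
qed (use assms in auto)

lemma orthonormal_congruence_inverse:
  assumes U: "orthonormal_mat n U" and A: "A \<in> carrier_mat n n"
  shows "U * (U\<^sup>T * A * U) * U\<^sup>T = A"
proof (rule mat_eq_by_mult_vec[of _ n])
  fix x :: "real vec" assume x: "x \<in> carrier_vec n"
  note U' = orthonormal_matD[OF U]
  have [simp]: "U\<^sup>T \<in> carrier_mat n n" using U' by simp
  show "(U * (U\<^sup>T * A * U) * U\<^sup>T) *\<^sub>v x = A *\<^sub>v x"
    using U' A x by (simp add: assoc_mult_mat_vec[of _ n n _ n] orthonormal_mat_vec[OF U])
qed (use orthonormal_matD[OF U] A in auto)

text \<open>A complex eigenvalue \<open>z\<close> of a real symmetric matrix is real: for an eigenvector
  \<open>v\<close>, the Hermitian form \<open>S = \<Sum> conj(v\<^sub>i) A\<^sub>i\<^sub>j v\<^sub>j\<close> equals \<open>z |v|\<^sup>2\<close> and is its own conjugate.\<close>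
lemma complex_eigenvalue_of_real_symmetric_is_real:
  fixes A :: "real mat" and v :: "complex vec"
  assumes A: "A \<in> carrier_mat n n" "A\<^sup>T = A"
    and v: "v \<in> carrier_vec n" "v \<noteq> 0\<^sub>v n"
    and ev: "map_mat complex_of_real A *\<^sub>v v = z \<cdot>\<^sub>v v"
  shows "cnj z = z"
proof -
  have row: "(\<Sum>j<n. of_real (A $$ (i,j)) * v $ j) = z * v $ i" if "i < n" for i
  proof -
    have "(map_mat complex_of_real A *\<^sub>v v) $ i = (\<Sum>j<n. of_real (A $$ (i,j)) * v $ j)"
      using that A v by (simp add: scalar_prod_def atLeast0LessThan)
    then show ?thesis using ev that v by simp
  qed
  define S where "S = (\<Sum>i<n. cnj (v $ i) * (\<Sum>j<n. of_real (A $$ (i,j)) * v $ j))"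
  define N where "N = (\<Sum>i<n. (cmod (v $ i))\<^sup>2)"
  have "S = (\<Sum>i<n. z * of_real ((cmod (v $ i))\<^sup>2))"
    unfolding S_def
  proof (intro sum.cong refl)
    fix i assume "i \<in> {..<n}"
    then have "cnj (v $ i) * (\<Sum>j<n. of_real (A $$ (i,j)) * v $ j) = z * (v $ i * cnj (v $ i))"
      using row by (simp add: mult_ac)
    then show "cnj (v $ i) * (\<Sum>j<n. of_real (A $$ (i,j)) * v $ j) = z * of_real ((cmod (v $ i))\<^sup>2)"
      by (simp only: complex_norm_square)
  qed
  then have S_eq: "S = z * of_real N" by (simp add: N_def sum_distrib_left)
  have "cnj S = (\<Sum>i<n. \<Sum>j<n. cnj (v $ j) * of_real (A $$ (i,j)) * v $ i)"
    unfolding S_def by (simp add: sum_distrib_left mult_ac)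
  also have "\<dots> = (\<Sum>i<n. \<Sum>j<n. cnj (v $ j) * of_real (A $$ (j,i)) * v $ i)"
    by (intro sum.cong refl) (simp add: symmetric_entry[OF A])
  also have "\<dots> = (\<Sum>j<n. \<Sum>i<n. cnj (v $ j) * of_real (A $$ (j,i)) * v $ i)"
    by (rule sum.swap)
  also have "\<dots> = S" unfolding S_def by (simp add: sum_distrib_left mult_ac)
  finally have S_real: "cnj S = S" .
  obtain i where i: "i < n" "v $ i \<noteq> 0" using nonzero_vec_entry[OF v] .
  have "N > 0" unfolding N_def by (rule sum_pos2[of _ i]) (use i in auto)
  moreover have "cnj z * of_real N = z * of_real N"
    using S_eq S_real by (metis complex_cnj_complex_of_real complex_cnj_mult)
  ultimately show ?thesis by simp
qed

text \<open>A root of the characteristic polynomial exists over \<open>\<complex>\<close>, and it is real by the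
  previous lemma.\<close>
lemma real_symmetric_has_eigenvalue:
  fixes A :: "real mat"
  assumes A: "A \<in> carrier_mat n n" "A\<^sup>T = A" and n: "n > 0"
  shows "\<exists>e. eigenvalue A e"
proof -
  let ?Ac = "map_mat complex_of_real A"
  have Ac: "?Ac \<in> carrier_mat n n" using A by simp
  have cp: "char_poly ?Ac = map_poly complex_of_real (char_poly A)"
    using of_real_hom.char_poly_hom[OF A(1)] by simp
  have "degree (char_poly ?Ac) = n" using degree_monic_char_poly[OF Ac] by simp
  then have "\<not> constant (poly (char_poly ?Ac))" using n constant_degree[of "char_poly ?Ac"] by simp
  then obtain z where z: "poly (char_poly ?Ac) z = 0" using fundamental_theorem_of_algebra by blast
  then have "eigenvalue ?Ac z" using eigenvalue_root_char_poly[OF Ac] by simp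
  then obtain v where "eigenvector ?Ac v z" unfolding eigenvalue_def by blast
  then have v: "v \<in> carrier_vec n" "v \<noteq> 0\<^sub>v n" "?Ac *\<^sub>v v = z \<cdot>\<^sub>v v"
    unfolding eigenvector_def using Ac by auto
  have "cnj z = z" by (rule complex_eigenvalue_of_real_symmetric_is_real[OF A v])
  then have "Im (cnj z) = Im z" by simp
  then have "Im z = 0" by simp
  then have z_real: "z = of_real (Re z)" by (simp add: complex_eq_iff)
  have "of_real (poly (char_poly A) (Re z)) = poly (char_poly ?Ac) (of_real (Re z))"
    by (simp add: cp of_real_hom.poly_map_poly)
  then have "poly (char_poly A) (Re z) = 0" using z z_real by simp
  then show ?thesis using eigenvalue_root_char_poly[OF A(1)] by blast
qed

subsection \<open>Householder reflections\<close>

text \<open>The reflection \<open>x \<mapsto> x - 2 (w \<bullet> x) / (w \<bullet> w) w\<close> (the identity for \<open>w = 0\<close>).\<close>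
definition householder :: "nat \<Rightarrow> real vec \<Rightarrow> real mat" where
  "householder n w =
     mat n n (\<lambda>(i,j). (if i = j then 1 else 0) - 2 / (w \<bullet> w) * (w $ i * w $ j))"

lemma householder_carrier [simp]: "householder n w \<in> carrier_mat n n"
  by (simp add: householder_def)

lemma householder_dim [simp]:
  "dim_row (householder n w) = n" "dim_col (householder n w) = n"
  by (simp_all add: householder_def)

lemma householder_transpose [simp]: "(householder n w)\<^sup>T = householder n w"
  by (rule eq_matI) (auto simp: householder_def mult.commute)

lemma householder_mult_vec_index:
  assumes x: "x \<in> carrier_vec n" and i: "i < n"
  shows "(householder n w *\<^sub>v x) $ i = x $ i - 2 / (w \<bullet> w) * (w \<bullet> x) * w $ i"
proof -
  have "(householder n w *\<^sub>v x) $ i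
      = (\<Sum>j\<in>{0..<n}. ((if i = j then 1 else 0) - 2 / (w \<bullet> w) * (w $ i * w $ j)) * x $ j)"
    using i x by (simp add: householder_def scalar_prod_def)
  also have "\<dots> = (\<Sum>j\<in>{0..<n}. (if i = j then x $ j else 0) - (2 / (w \<bullet> w) * w $ i) * (w $ j * x $ j))"
    by (intro sum.cong refl) (auto simp: algebra_simps)
  also have "\<dots> = x $ i - 2 / (w \<bullet> w) * w $ i * (\<Sum>j\<in>{0..<n}. w $ j * x $ j)"
    using i by (simp add: sum_subtractf sum_distrib_left)
  also have "\<dots> = x $ i - 2 / (w \<bullet> w) * (w \<bullet> x) * w $ i"
    using x by (simp add: scalar_prod_def)
  finally show ?thesis .
qed

lemma householder_mult_vec:
  assumes w: "w \<in> carrier_vec n" and x: "x \<in> carrier_vec n"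
  shows "householder n w *\<^sub>v x = x - (2 / (w \<bullet> w) * (w \<bullet> x)) \<cdot>\<^sub>v w"
proof (rule eq_vecI)
  fix i assume "i < dim_vec (x - (2 / (w \<bullet> w) * (w \<bullet> x)) \<cdot>\<^sub>v w)"
  then have i: "i < n" using w by simp
  show "(householder n w *\<^sub>v x) $ i = (x - (2 / (w \<bullet> w) * (w \<bullet> x)) \<cdot>\<^sub>v w) $ i"
    unfolding householder_mult_vec_index[OF x i] using i w by simp
qed (use w in simp)

lemma householder_fixes_orthogonal:
  assumes w: "w \<in> carrier_vec n" and x: "x \<in> carrier_vec n" and "w \<bullet> x = 0"
  shows "householder n w *\<^sub>v x = x"
proof (rule eq_vecI)
  fix i assume "i < dim_vec x"
  then have i: "i < n" using x by simp
  show "(householder n w *\<^sub>v x) $ i = x $ i"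
    unfolding householder_mult_vec_index[OF x i] using assms by simp
qed (use x in simp)

lemma householder_involution_vec:
  assumes w: "w \<in> carrier_vec n" and x: "x \<in> carrier_vec n"
  shows "householder n w *\<^sub>v (householder n w *\<^sub>v x) = x"
proof (cases "w \<bullet> w = 0")
  case True
  then have "w = 0\<^sub>v n" using real_self_scalar_prod_eq_0[OF w] by simp
  then have fixes_all: "householder n w *\<^sub>v y = y" if "y \<in> carrier_vec n" for y
    using that by (intro householder_fixes_orthogonal[OF w that]) simp
  show ?thesis using x by (simp add: fixes_all)
next
  case False
  let ?c = "2 / (w \<bullet> w)"
  have Hx: "householder n w *\<^sub>v x = x - (?c * (w \<bullet> x)) \<cdot>\<^sub>v w"
    by (rule householder_mult_vec[OF w x])
  have "w \<bullet> (householder n w *\<^sub>v x) = w \<bullet> x - ?c * (w \<bullet> x) * (w \<bullet> w)"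
    unfolding Hx using w x by (simp add: scalar_prod_minus_distrib)
  also have "\<dots> = - (w \<bullet> x)" using False by simp
  finally have wHx: "w \<bullet> (householder n w *\<^sub>v x) = - (w \<bullet> x)" .
  show ?thesis
  proof (rule eq_vecI)
    fix i assume "i < dim_vec x"
    then have i: "i < n" using x by simp
    have Hx_c: "householder n w *\<^sub>v x \<in> carrier_vec n"
      by (rule mult_mat_vec_carrier[OF householder_carrier x])
    show "(householder n w *\<^sub>v (householder n w *\<^sub>v x)) $ i = x $ i"
      unfolding householder_mult_vec_index[OF Hx_c i] householder_mult_vec_index[OF x i] wHx
      by simp
  qed (use x in simp)
qed

lemma householder_orthonormal:
  assumes w: "w \<in> carrier_vec n"
  shows "orthonormal_mat n (householder n w)"
proof -
  have "householder n w * householder n w = 1\<^sub>m n"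
  proof (rule mat_eq_by_mult_vec[of _ n])
    fix x :: "real vec" assume x: "x \<in> carrier_vec n"
    have "(householder n w * householder n w) *\<^sub>v x = householder n w *\<^sub>v (householder n w *\<^sub>v x)"
      using x by (simp add: assoc_mult_mat_vec[of _ n n _ n])
    then show "(householder n w * householder n w) *\<^sub>v x = 1\<^sub>m n *\<^sub>v x"
      using householder_involution_vec[OF w x] x by simp
  qed auto
  then show ?thesis unfolding orthonormal_mat_def by simp
qed

lemma householder_swaps:
  assumes u: "u \<in> carrier_vec n" and e: "e \<in> carrier_vec n" and len: "u \<bullet> u = e \<bullet> e"
  shows "householder n (u - e) *\<^sub>v e = u"
proof -
  define w where "w = u - e"
  have wc: "w \<in> carrier_vec n" using u e by (simp add: w_def)
  have we: "w \<bullet> e = u \<bullet> e - e \<bullet> e" using u e by (simp add: w_def minus_scalar_prod_distrib)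
  have "w \<bullet> w = w \<bullet> u - w \<bullet> e"
    using scalar_prod_minus_distrib[OF wc u e] unfolding w_def[symmetric] .
  also have "w \<bullet> u = u \<bullet> u - e \<bullet> u" using u e by (simp add: w_def minus_scalar_prod_distrib)
  finally have ww: "w \<bullet> w = - 2 * (w \<bullet> e)"
    using we len comm_scalar_prod[OF e u] by simp
  have "2 / (w \<bullet> w) * (w \<bullet> e) = -1 \<or> w = 0\<^sub>v n"
    using ww real_self_scalar_prod_eq_0[OF wc] by (cases "w \<bullet> w = 0") auto
  then have coeff: "2 / (w \<bullet> w) * (w \<bullet> e) * w $ i = - w $ i" if "i < n" for i
  proof
    assume "2 / (w \<bullet> w) * (w \<bullet> e) = -1"
    then show ?thesis by (simp only: mult_minus1)
  qed (use that in simp)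
  show ?thesis
  proof (rule eq_vecI)
    fix i assume "i < dim_vec u"
    then have i: "i < n" using u by simp
    show "(householder n (u - e) *\<^sub>v e) $ i = u $ i"
      unfolding w_def[symmetric] householder_mult_vec_index[OF e i] coeff[OF i]
      using i u e by (simp add: w_def)
  qed (use u in simp)
qed

lemma householder_onto_unit_vec:
  assumes u: "u \<in> carrier_vec n" "u \<bullet> u = 1" "\<forall>i<k. u $ i = 0" and k: "k < n"
  defines "H \<equiv> householder n (u - unit_vec n k)"
  shows "H *\<^sub>v unit_vec n k = u" "H *\<^sub>v u = unit_vec n k"
    and "\<And>j. j < k \<Longrightarrow> H *\<^sub>v unit_vec n j = unit_vec n j"
proof -
  show H_ek: "H *\<^sub>v unit_vec n k = u"
    unfolding H_def by (rule householder_swaps) (use u k in auto)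
  show "H *\<^sub>v u = unit_vec n k"
    using householder_involution_vec[of "u - unit_vec n k" n "unit_vec n k"] H_ek u(1)
    unfolding H_def by simp
  show "H *\<^sub>v unit_vec n j = unit_vec n j" if "j < k" for j
    unfolding H_def using u that k
    by (intro householder_fixes_orthogonal) (auto simp: minus_scalar_prod_distrib)
qed

subsection \<open>The spectral theorem\<close>

text \<open>The first \<open>k\<close> columns of \<open>B\<close> are multiples of unit vectors; the induction invariant of
  the diagonalisation.\<close>
definition diagonal_upto :: "nat \<Rightarrow> 'a :: zero mat \<Rightarrow> bool" where
  "diagonal_upto k B \<longleftrightarrow> (\<forall>i < dim_row B. \<forall>j < k. i \<noteq> j \<longrightarrow> B $$ (i,j) = 0)"

lemma diagonal_upto_column:
  fixes B :: "real mat"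
  assumes B: "B \<in> carrier_mat n n" and diag: "diagonal_upto k B" and j: "j < k" "k \<le> n"
  shows "B *\<^sub>v unit_vec n j = B $$ (j,j) \<cdot>\<^sub>v unit_vec n j"
proof (rule eq_vecI)
  fix i assume "i < dim_vec (B $$ (j,j) \<cdot>\<^sub>v unit_vec n j)"
  then have i: "i < n" by simp
  then show "(B *\<^sub>v unit_vec n j) $ i = (B $$ (j,j) \<cdot>\<^sub>v unit_vec n j) $ i"
    using B diag j unfolding diagonal_upto_def by (cases "i = j") auto
qed (use B in simp)

lemma eigen_column_zero:
  fixes B :: "real mat"
  assumes B: "B \<in> carrier_mat n n" and ij: "i < n" "j < n" "i \<noteq> j"
    and col: "B *\<^sub>v unit_vec n j = c \<cdot>\<^sub>v unit_vec n j"
  shows "B $$ (i,j) = 0"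
proof -
  have "B $$ (i,j) = (B *\<^sub>v unit_vec n j) $ i" using B ij by simp
  then show ?thesis using col ij by simp
qed

lemma block_eigenvector_extend:
  fixes B :: "real mat"
  assumes B: "B \<in> carrier_mat (m + k) (m + k)"
    and upper_zero: "\<And>i j. i < k \<Longrightarrow> k \<le> j \<Longrightarrow> j < m + k \<Longrightarrow> B $$ (i,j) = 0"
    and w: "w \<in> carrier_vec m" and ev: "mat m m (\<lambda>(i,j). B $$ (i + k, j + k)) *\<^sub>v w = e \<cdot>\<^sub>v w"
  defines "v \<equiv> vec (m + k) (\<lambda>i. if i < k then 0 else w $ (i - k))"
  shows "B *\<^sub>v v = e \<cdot>\<^sub>v v"
proof (rule eq_vecI)
  have row_v: "(B *\<^sub>v v) $ i = (\<Sum>j<m. B $$ (i, j + k) * w $ j)" if i: "i < m + k" for i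
  proof -
    have "(B *\<^sub>v v) $ i = (\<Sum>j<m + k. B $$ (i,j) * v $ j)"
      using i B by (simp add: v_def scalar_prod_def atLeast0LessThan)
    also have "\<dots> = (\<Sum>j\<in>{k..<m + k}. B $$ (i,j) * v $ j)"
      by (rule sum.mono_neutral_right) (auto simp: v_def)
    also have "\<dots> = (\<Sum>j<m. B $$ (i, j + k) * w $ j)"
      by (simp add: sum.shift_bounds_nat_ivl[of _ 0 k m, simplified] atLeast0LessThan v_def)
    finally show ?thesis .
  qed
  fix i assume "i < dim_vec (e \<cdot>\<^sub>v v)"
  then have i: "i < m + k" by (simp add: v_def)
  show "(B *\<^sub>v v) $ i = (e \<cdot>\<^sub>v v) $ i"
  proof (cases "i < k")
    case True
    then show ?thesis unfolding row_v[OF i] using i upper_zero by (simp add: v_def)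
  next
    case False
    then have "(\<Sum>j<m. B $$ (i, j + k) * w $ j) = e * w $ (i - k)"
      using arg_cong[OF ev, of "\<lambda>x. x $ (i - k)"] i w by (simp add: scalar_prod_def atLeast0LessThan)
    then show ?thesis unfolding row_v[OF i] using i False by (simp add: v_def)
  qed
qed (use B in \<open>simp add: v_def\<close>)

lemma symmetric_tail_eigenvector:
  fixes B :: "real mat"
  assumes B: "B \<in> carrier_mat n n" "B\<^sup>T = B" and diag: "diagonal_upto k B" and k: "k < n"
  shows "\<exists>v e. v \<in> carrier_vec n \<and> v \<noteq> 0\<^sub>v n \<and> (\<forall>i<k. v $ i = 0) \<and> B *\<^sub>v v = e \<cdot>\<^sub>v v"
proof -
  obtain m where n: "n = m + k" and m0: "m > 0" using k by (metis add.commute less_imp_add_positive)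
  define C where "C = mat m m (\<lambda>(i,j). B $$ (i + k, j + k))"
  have C: "C \<in> carrier_mat m m" "C\<^sup>T = C"
    using symmetric_entry[OF B] n by (auto simp: C_def)
  obtain e w where "eigenvector C w e"
    using real_symmetric_has_eigenvalue[OF C m0] unfolding eigenvalue_def by blast
  then have w: "w \<in> carrier_vec m" "w \<noteq> 0\<^sub>v m" "C *\<^sub>v w = e \<cdot>\<^sub>v w"
    unfolding eigenvector_def using C by auto
  define v where "v = vec n (\<lambda>i. if i < k then 0 else w $ (i - k))"
  have v: "v \<in> carrier_vec n" "\<forall>i<k. v $ i = 0" using k unfolding v_def by auto
  have "B $$ (i, j) = 0" if "i < k" "k \<le> j" "j < m + k" for i j
    using diag that symmetric_entry[OF B, of i j] B n unfolding diagonal_upto_def by auto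
  then have "B *\<^sub>v v = e \<cdot>\<^sub>v v"
    using block_eigenvector_extend[of B m k w e] B(1) w(1,3) n unfolding v_def C_def by simp
  moreover have "v \<noteq> 0\<^sub>v n"
  proof
    assume "v = 0\<^sub>v n"
    have "w $ i = 0" if "i < m" for i
    proof -
      have "w $ i = v $ (i + k)" using that n by (simp add: v_def)
      then show ?thesis using \<open>v = 0\<^sub>v n\<close> that n by simp
    qed
    then show False using nonzero_vec_entry[OF w(1,2)] by metis
  qed
  ultimately show ?thesis using v by blast
qed

text \<open>One more column: reflect the unit tail eigenvector onto the \<open>k\<close>-th unit vector.\<close>
lemma spectral_step:
  fixes A U :: "real mat"
  assumes A: "A \<in> carrier_mat n n" "A\<^sup>T = A" and U: "orthonormal_mat n U" and k: "k < n"
    and diag: "diagonal_upto k (U\<^sup>T * A * U)"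
  shows "\<exists>U'. orthonormal_mat n U' \<and> diagonal_upto (Suc k) (U'\<^sup>T * A * U')"
proof -
  define B where "B = U\<^sup>T * A * U"
  have Uc: "U \<in> carrier_mat n n" using orthonormal_matD[OF U] by simp
  have B: "B \<in> carrier_mat n n" "B\<^sup>T = B"
    using congruence_symmetric[OF A Uc] A Uc unfolding B_def by auto
  obtain v e where v: "v \<in> carrier_vec n" "v \<noteq> 0\<^sub>v n" "\<forall>i<k. v $ i = 0" "B *\<^sub>v v = e \<cdot>\<^sub>v v"
    using symmetric_tail_eigenvector[OF B diag[folded B_def] k] by blast
  define u where "u = (1 / sqrt (v \<bullet> v)) \<cdot>\<^sub>v v"
  have u: "u \<in> carrier_vec n" "u \<bullet> u = 1" "\<forall>i<k. u $ i = 0" "B *\<^sub>v u = e \<cdot>\<^sub>v u"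
    using v B k normalized_vec[OF v(1,2)] unfolding u_def
    by (auto simp: mult_mat_vec smult_smult_assoc mult.commute)
  define H where "H = householder n (u - unit_vec n k)"
  have H: "H \<in> carrier_mat n n" "H\<^sup>T = H" "orthonormal_mat n H"
    unfolding H_def using u(1) by (auto intro: householder_orthonormal)
  note H_ek = householder_onto_unit_vec(1)[OF u(1-3) k, folded H_def]
  note H_u = householder_onto_unit_vec(2)[OF u(1-3) k, folded H_def]
  note H_ej = householder_onto_unit_vec(3)[OF u(1-3) k, folded H_def]
  define B' where "B' = H * B * H"
  have B'c: "B' \<in> carrier_mat n n" using H B unfolding B'_def by simp
  have B'_vec: "B' *\<^sub>v x = H *\<^sub>v (B *\<^sub>v (H *\<^sub>v x))" if "x \<in> carrier_vec n" for x
    using H B that unfolding B'_def by (simp add: assoc_mult_mat_vec[of _ n n _ n])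
  have col: "B' *\<^sub>v unit_vec n j = B $$ (j,j) \<cdot>\<^sub>v unit_vec n j" if "j < k" for j
    using that k H_ej B B'_vec diagonal_upto_column[OF B(1) diag[folded B_def] that]
    by (simp add: mult_mat_vec[OF H(1)])
  have col_k: "B' *\<^sub>v unit_vec n k = e \<cdot>\<^sub>v unit_vec n k"
    using B'_vec H_ek H_u u(1,4) by (simp add: mult_mat_vec[OF H(1)])
  have "diagonal_upto (Suc k) B'"
    unfolding diagonal_upto_def
  proof (intro allI impI)
    fix i j assume "i < dim_row B'" "j < Suc k" "i \<noteq> j"
    then show "B' $$ (i,j) = 0"
      using eigen_column_zero[OF B'c] col col_k B'c k by (cases "j = k") auto
  qed
  moreover have "B' = (U * H)\<^sup>T * A * (U * H)"
    unfolding B'_def B_def using congruence_mult[OF A(1) Uc H(1)] H(2) by simp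
  moreover have "orthonormal_mat n (U * H)" by (rule orthonormal_mat_mult[OF U H(3)])
  ultimately show ?thesis by metis
qed

theorem real_symmetric_spectral:
  fixes A :: "real mat"
  assumes A: "A \<in> carrier_mat n n" "A\<^sup>T = A"
  shows "\<exists>U. orthonormal_mat n U \<and> diagonal_mat (U\<^sup>T * A * U)"
proof -
  have "\<exists>U. orthonormal_mat n U \<and> diagonal_upto k (U\<^sup>T * A * U)" if "k \<le> n" for k
    using that
  proof (induction k)
    case 0
    show ?case using orthonormal_mat_one unfolding diagonal_upto_def by blast
  next
    case (Suc k)
    then obtain U where "orthonormal_mat n U" "diagonal_upto k (U\<^sup>T * A * U)" by auto
    then show ?case using spectral_step[OF A] Suc.prems by simp
  qed
  then obtain U where U: "orthonormal_mat n U" "diagonal_upto n (U\<^sup>T * A * U)" by blast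
  have "U\<^sup>T * A * U \<in> carrier_mat n n" using orthonormal_matD[OF U(1)] A by simp
  then have "dim_row (U\<^sup>T * A * U) = n" "dim_col (U\<^sup>T * A * U) = n" by auto
  then have "diagonal_mat (U\<^sup>T * A * U)"
    using U(2) unfolding diagonal_upto_def diagonal_mat_def by metis
  then show ?thesis using U(1) by blast
qed

definition num_sign_eig :: "real \<Rightarrow> real mat \<Rightarrow> nat" where
  "num_sign_eig \<sigma> A = (\<Sum>r\<in>{r. 0 < \<sigma> * r \<and> poly (char_poly A) r = 0}. order r (char_poly A))"

lemma num_pos_eig_sign: "num_pos_eig A = num_sign_eig 1 A"
  unfolding num_pos_eig_def num_sign_eig_def by simp

lemma num_neg_eig_sign: "num_neg_eig A = num_sign_eig (-1) A"
  unfolding num_neg_eig_def num_sign_eig_def by simp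

lemma order_prod_linear: "order r (\<Prod>a\<leftarrow>ds. [:-a, 1:]) = count_list ds (r :: real)"
proof (induction ds)
  case Nil
  then show ?case by (simp add: order_1)
next
  case (Cons x ds)
  have "(\<Prod>a\<leftarrow>ds. [:-a, 1:]) \<noteq> (0 :: real poly)" by (auto simp: prod_list_zero_iff)
  then have "[:-x, 1:] * (\<Prod>a\<leftarrow>ds. [:-a, 1:]) \<noteq> 0" by (intro no_zero_divisors) simp_all
  then have "order r ([:-x, 1:] * (\<Prod>a\<leftarrow>ds. [:-a, 1:]))
      = order r [:-x, 1:] + order r (\<Prod>a\<leftarrow>ds. [:-a, 1:])"
    by (rule order_mult)
  then have "order r (\<Prod>a\<leftarrow>x # ds. [:-a, 1:]) = order r [:-x, 1:] + order r (\<Prod>a\<leftarrow>ds. [:-a, 1:])"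
    by (simp only: list.map prod_list.Cons)
  also have "order r [:-x, 1:] = (if x = r then 1 else 0)" by (simp add: order_linear')
  finally show ?case using Cons by simp
qed

lemma sum_count_list:
  assumes "finite T"
  shows "(\<Sum>r\<in>T. count_list ds r) = length (filter (\<lambda>x. x \<in> T) ds)"
proof (induction ds)
  case (Cons a ds)
  have "(\<Sum>r\<in>T. count_list (a # ds) r) = (\<Sum>r\<in>T. count_list ds r + (if a = r then 1 else 0))"
    by (intro sum.cong refl) simp
  also have "\<dots> = (\<Sum>r\<in>T. count_list ds r) + (if a \<in> T then 1 else 0)"
    using assms by (simp add: sum.distrib sum.delta)
  finally show ?case using Cons by simp
qed simp

lemma roots_count_prod_linear:
  fixes P :: "real \<Rightarrow> bool" and ds :: "real list"
  shows "(\<Sum>r\<in>{r. P r \<and> poly (\<Prod>a\<leftarrow>ds. [:-a, 1:]) r = 0}. order r (\<Prod>a\<leftarrow>ds. [:-a, 1:]))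
         = length (filter P ds)"
proof -
  have T: "{r. P r \<and> poly (\<Prod>a\<leftarrow>ds. [:-a, 1:]) r = 0} = {r. P r \<and> r \<in> set ds}"
    by (auto simp: poly_prod_list_zero_iff)
  have "filter (\<lambda>x. x \<in> {r. P r \<and> r \<in> set ds}) ds = filter P ds"
    by (rule filter_cong) auto
  then show ?thesis unfolding T order_prod_linear by (simp add: sum_count_list)
qed

lemma num_sign_eig_diagonal:
  assumes D: "D \<in> carrier_mat n n" "diagonal_mat D"
  shows "num_sign_eig \<sigma> D = length (filter (\<lambda>x. 0 < \<sigma> * x) (diag_mat D))"
proof -
  have "upper_triangular D" using D unfolding diagonal_mat_def upper_triangular_def by auto
  then have "char_poly D = (\<Prod>a\<leftarrow>diag_mat D. [:-a, 1:])"
    by (rule char_poly_upper_triangular[OF D(1)])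
  then show ?thesis unfolding num_sign_eig_def by (simp add: roots_count_prod_linear)
qed

text \<open>An orthogonal congruence is a similarity, so the eigenvalue count can be read off
  the diagonal of an orthogonal diagonalisation.\<close>
lemma char_poly_orthonormal_congruence:
  assumes U: "orthonormal_mat n U" and A: "A \<in> carrier_mat n n"
  shows "char_poly (U\<^sup>T * A * U) = char_poly A"
proof -
  note U' = orthonormal_matD[OF U]
  have "similar_mat_wit A (U\<^sup>T * A * U) U U\<^sup>T"
    using U' A orthonormal_congruence_inverse[OF U A] unfolding similar_mat_wit_def Let_def by auto
  then show ?thesis using char_poly_similar unfolding similar_mat_def by metis
qed

lemma num_sign_eig_spectral:
  fixes A U :: "real mat"
  assumes A: "A \<in> carrier_mat n n" and U: "orthonormal_mat n U"
    and diag: "diagonal_mat (U\<^sup>T * A * U)"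
  shows "num_sign_eig \<sigma> A = length (filter (\<lambda>x. 0 < \<sigma> * x) (diag_mat (U\<^sup>T * A * U)))"
proof -
  have "U\<^sup>T * A * U \<in> carrier_mat n n" using A orthonormal_matD[OF U] by simp
  then have "num_sign_eig \<sigma> (U\<^sup>T * A * U) = length (filter (\<lambda>x. 0 < \<sigma> * x) (diag_mat (U\<^sup>T * A * U)))"
    using num_sign_eig_diagonal diag by blast
  then show ?thesis unfolding num_sign_eig_def char_poly_orthonormal_congruence[OF U A] .
qed

subsection \<open>Sylvester's law of inertia\<close>

lemma quadratic_form_congruence:
  fixes A P :: "real mat"
  assumes A: "A \<in> carrier_mat n n" and P: "P \<in> carrier_mat n n" and x: "x \<in> carrier_vec n"
  shows "x \<bullet> ((P\<^sup>T * A * P) *\<^sub>v x) = (P *\<^sub>v x) \<bullet> (A *\<^sub>v (P *\<^sub>v x))"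
proof -
  have APx: "A *\<^sub>v (P *\<^sub>v x) \<in> carrier_vec n" using A P x by simp
  have "(P\<^sup>T * A * P) *\<^sub>v x = P\<^sup>T *\<^sub>v (A *\<^sub>v (P *\<^sub>v x))"
    using A P x by (simp add: assoc_mult_mat_vec[of _ n n _ n])
  then have "x \<bullet> ((P\<^sup>T * A * P) *\<^sub>v x) = (P\<^sup>T *\<^sub>v (A *\<^sub>v (P *\<^sub>v x))) \<bullet> x"
    using A P x by (simp add: comm_scalar_prod[of x n])
  also have "\<dots> = (A *\<^sub>v (P *\<^sub>v x)) \<bullet> (P *\<^sub>v x)"
    by (rule transpose_vec_mult_scalar[OF P x APx])
  also have "\<dots> = (P *\<^sub>v x) \<bullet> (A *\<^sub>v (P *\<^sub>v x))"
    using A P x by (simp add: comm_scalar_prod[of _ n])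
  finally show ?thesis .
qed

lemma quadratic_form_diagonal:
  fixes D :: "real mat"
  assumes D: "D \<in> carrier_mat n n" "diagonal_mat D" and z: "z \<in> carrier_vec n"
  shows "z \<bullet> (D *\<^sub>v z) = (\<Sum>i<n. D $$ (i,i) * (z $ i)\<^sup>2)"
proof -
  have "(D *\<^sub>v z) $ i = D $$ (i,i) * z $ i" if i: "i < n" for i
  proof -
    have "(D *\<^sub>v z) $ i = (\<Sum>j<n. D $$ (i,j) * z $ j)"
      using D z i by (simp add: scalar_prod_def atLeast0LessThan)
    also have "\<dots> = D $$ (i,i) * z $ i"
      using D i by (subst sum.remove[of _ i]) (auto simp: diagonal_mat_def intro!: sum.neutral)
    finally show ?thesis .
  qed
  then show ?thesis
    using D z by (simp add: scalar_prod_def atLeast0LessThan power2_eq_square mult_ac)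
qed

text \<open>A positive frame: an \<open>n \<times> k\<close> matrix \<open>X\<close> such that \<open>\<sigma> q\<^sub>A\<close> is positive definite on the
  image of \<open>X\<close>; in particular \<open>X\<close> has rank \<open>k\<close>.\<close>
definition positive_frame :: "real \<Rightarrow> real mat \<Rightarrow> nat \<Rightarrow> real mat \<Rightarrow> bool" where
  "positive_frame \<sigma> A k X \<longleftrightarrow> X \<in> carrier_mat (dim_row A) k \<and>
     (\<forall>y \<in> carrier_vec k. y \<noteq> 0\<^sub>v k \<longrightarrow> 0 < \<sigma> * ((X *\<^sub>v y) \<bullet> (A *\<^sub>v (X *\<^sub>v y))))"

lemma positive_frame_congruence:
  fixes A P X :: "real mat"
  assumes A: "A \<in> carrier_mat n n" and P: "P \<in> carrier_mat n n"
    and frame: "positive_frame \<sigma> (P\<^sup>T * A * P) k X"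
  shows "positive_frame \<sigma> A k (P * X)"
proof -
  have X: "X \<in> carrier_mat n k" using frame P unfolding positive_frame_def by simp
  have "0 < \<sigma> * (((P * X) *\<^sub>v y) \<bullet> (A *\<^sub>v ((P * X) *\<^sub>v y)))"
    if y: "y \<in> carrier_vec k" "y \<noteq> 0\<^sub>v k" for y
  proof -
    have Xy: "X *\<^sub>v y \<in> carrier_vec n" using X y by simp
    have "0 < \<sigma> * ((X *\<^sub>v y) \<bullet> ((P\<^sup>T * A * P) *\<^sub>v (X *\<^sub>v y)))"
      using frame y unfolding positive_frame_def by blast
    moreover have "(P * X) *\<^sub>v y = P *\<^sub>v (X *\<^sub>v y)" using P X y by simp
    ultimately show ?thesis unfolding quadratic_form_congruence[OF A P Xy] by simp
  qed
  then show ?thesis using A P X unfolding positive_frame_def by simp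
qed

lemma nonzero_orthogonal_vec_exists:
  fixes g :: "nat \<Rightarrow> real vec"
  assumes g: "\<And>r. r < p \<Longrightarrow> g r \<in> carrier_vec k" and pk: "p < k"
  shows "\<exists>y \<in> carrier_vec k. y \<noteq> 0\<^sub>v k \<and> (\<forall>r<p. g r \<bullet> y = 0)"
proof -
  define R where "R = mat k k (\<lambda>(i,j). if i < p then g i $ j else 0)"
  have Rc: "R \<in> carrier_mat k k" unfolding R_def by simp
  have "R = mat\<^sub>r k k (\<lambda>i. if i = k - 1 then 0\<^sub>v k else vec k (\<lambda>j. if i < p then g i $ j else 0))"
    unfolding R_def using pk by (intro eq_matI) auto
  moreover have "det (mat\<^sub>r k k (\<lambda>i. if i = k - 1 then 0\<^sub>v k else vec k (\<lambda>j. if i < p then g i $ j else 0))) = 0"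
    by (rule det_row_0) (use pk in auto)
  ultimately have "det R = 0" by simp
  then obtain y where y: "y \<in> carrier_vec k" "y \<noteq> 0\<^sub>v k" "R *\<^sub>v y = 0\<^sub>v k"
    using det_0_iff_vec_prod_zero_field[OF Rc] by blast
  have "g r \<bullet> y = 0" if r: "r < p" for r
  proof -
    have "(R *\<^sub>v y) $ r = g r \<bullet> y"
      using r pk g[OF r] y(1) unfolding R_def by (simp add: scalar_prod_def)
    then show ?thesis using y(3) r pk by simp
  qed
  then show ?thesis using y by blast
qed

lemma length_filter_diag_mat:
  assumes "D \<in> carrier_mat n n"
  shows "length (filter P (diag_mat D)) = length (filter (\<lambda>i. P (D $$ (i,i))) [0..<n])"
  using assms by (simp add: diag_mat_def filter_map comp_def)

text \<open>For a diagonal matrix, a frame cannot be larger than the number of diagonal entries of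
  sign \<open>\<sigma>\<close>: otherwise some nonzero vector in its image vanishes on all of them.\<close>
lemma positive_frame_diagonal_le:
  fixes D X :: "real mat"
  assumes D: "D \<in> carrier_mat n n" "diagonal_mat D" and frame: "positive_frame \<sigma> D k X"
  shows "k \<le> length (filter (\<lambda>x. 0 < \<sigma> * x) (diag_mat D))"
proof (rule ccontr)
  define idx where "idx = filter (\<lambda>i. 0 < \<sigma> * D $$ (i,i)) [0..<n]"
  assume "\<not> ?thesis"
  then have pk: "length idx < k"
    unfolding idx_def length_filter_diag_mat[OF D(1)] by simp
  have X: "X \<in> carrier_mat n k" using frame D unfolding positive_frame_def by simp
  have rows: "row X (idx ! r) \<in> carrier_vec k" for r by (rule carrier_vecI) (use X in simp)
  obtain y where y: "y \<in> carrier_vec k" "y \<noteq> 0\<^sub>v k"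
    and y_orth: "\<forall>r < length idx. row X (idx ! r) \<bullet> y = 0"
    using nonzero_orthogonal_vec_exists[of "length idx" "\<lambda>r. row X (idx ! r)", OF rows pk] by blast
  define z where "z = X *\<^sub>v y"
  have z: "z \<in> carrier_vec n" using X y unfolding z_def by simp
  have z_zero: "z $ i = 0" if "i < n" "0 < \<sigma> * D $$ (i,i)" for i
  proof -
    have "i \<in> set idx" using that unfolding idx_def by simp
    then obtain r where "r < length idx" "idx ! r = i" by (auto simp: in_set_conv_nth)
    then show ?thesis using y_orth that X unfolding z_def by auto
  qed
  have "\<sigma> * (z \<bullet> (D *\<^sub>v z)) = (\<Sum>i<n. \<sigma> * D $$ (i,i) * (z $ i)\<^sup>2)"
    using quadratic_form_diagonal[OF D z] by (simp add: sum_distrib_left mult.assoc)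
  also have "\<dots> \<le> 0"
  proof (rule sum_nonpos)
    fix i assume "i \<in> {..<n}"
    then show "\<sigma> * D $$ (i,i) * (z $ i)\<^sup>2 \<le> 0"
      using z_zero[of i] by (cases "0 < \<sigma> * D $$ (i,i)") (auto simp: mult_nonpos_nonneg)
  qed
  finally show False using frame y unfolding positive_frame_def z_def by fastforce
qed

lemma selection_mat_mult_vec:
  fixes y :: "real vec"
  assumes idx: "distinct idx" "set idx \<subseteq> {..<n}" and y: "y \<in> carrier_vec (length idx)"
  defines "X \<equiv> mat n (length idx) (\<lambda>(i,r). if i = idx ! r then 1 else 0 :: real)"
  shows "\<And>r. r < length idx \<Longrightarrow> (X *\<^sub>v y) $ (idx ! r) = y $ r"
    and "\<And>i. i < n \<Longrightarrow> i \<notin> set idx \<Longrightarrow> (X *\<^sub>v y) $ i = 0"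
proof -
  have entry: "(X *\<^sub>v y) $ i = (\<Sum>r<length idx. if i = idx ! r then y $ r else 0)" if "i < n" for i
    using that y unfolding X_def
    by (simp add: scalar_prod_def atLeast0LessThan) (intro sum.cong refl, simp)
  show "(X *\<^sub>v y) $ i = 0" if "i < n" "i \<notin> set idx" for i
    using that entry by (auto intro!: sum.neutral)
  show "(X *\<^sub>v y) $ (idx ! r0) = y $ r0" if r0: "r0 < length idx" for r0
  proof -
    have "idx ! r0 < n" using idx(2) nth_mem[OF r0] by auto
    then have "(X *\<^sub>v y) $ (idx ! r0) = (\<Sum>r<length idx. if idx ! r0 = idx ! r then y $ r else 0)"
      by (rule entry)
    also have "\<dots> = (\<Sum>r<length idx. if r = r0 then y $ r else 0)"
      using nth_eq_iff_index_eq[OF idx(1)] r0 by (intro sum.cong refl) auto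
    finally show ?thesis using r0 by simp
  qed
qed

lemma positive_frame_diagonal_exists:
  fixes D :: "real mat"
  assumes D: "D \<in> carrier_mat n n" "diagonal_mat D"
  shows "\<exists>X. positive_frame \<sigma> D (length (filter (\<lambda>x. 0 < \<sigma> * x) (diag_mat D))) X"
proof -
  define idx where "idx = filter (\<lambda>i. 0 < \<sigma> * D $$ (i,i)) [0..<n]"
  define p where "p = length idx"
  have p: "length (filter (\<lambda>x. 0 < \<sigma> * x) (diag_mat D)) = p"
    unfolding p_def idx_def length_filter_diag_mat[OF D(1)] ..
  have idx: "distinct idx" "set idx \<subseteq> {..<n}" unfolding idx_def by auto
  have idx_lt: "idx ! r < n" and idx_pos: "0 < \<sigma> * D $$ (idx ! r, idx ! r)" if "r < p" for r
    using nth_mem[OF that[unfolded p_def]] unfolding idx_def by auto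
  define X where "X = mat n p (\<lambda>(i,r). if i = idx ! r then 1 else 0 :: real)"
  have X: "X \<in> carrier_mat n p" unfolding X_def by simp
  have "0 < \<sigma> * ((X *\<^sub>v y) \<bullet> (D *\<^sub>v (X *\<^sub>v y)))" if y: "y \<in> carrier_vec p" "y \<noteq> 0\<^sub>v p" for y
  proof -
    obtain r0 where r0: "r0 < p" "y $ r0 \<noteq> 0" using nonzero_vec_entry[OF y] by blast
    define z where "z = X *\<^sub>v y"
    have z: "z \<in> carrier_vec n" using X y unfolding z_def by simp
    have z_sel: "z $ (idx ! r) = y $ r" if "r < p" for r
      using selection_mat_mult_vec(1)[OF idx y(1)[unfolded p_def]] that
      unfolding z_def X_def p_def by simp
    have z_out: "z $ i = 0" if "i < n" "i \<notin> set idx" for i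
      using selection_mat_mult_vec(2)[OF idx y(1)[unfolded p_def]] that
      unfolding z_def X_def p_def by simp
    have "\<sigma> * (z \<bullet> (D *\<^sub>v z)) = (\<Sum>i<n. \<sigma> * D $$ (i,i) * (z $ i)\<^sup>2)"
      using quadratic_form_diagonal[OF D z] by (simp add: sum_distrib_left mult.assoc)
    also have "\<dots> > 0"
    proof (rule sum_pos2[of _ "idx ! r0"])
      show "0 < \<sigma> * D $$ (idx ! r0, idx ! r0) * (z $ (idx ! r0))\<^sup>2"
        using idx_pos[OF r0(1)] z_sel[OF r0(1)] r0(2) by simp
      show "0 \<le> \<sigma> * D $$ (i,i) * (z $ i)\<^sup>2" if "i \<in> {..<n}" for i
      proof (cases "0 < \<sigma> * D $$ (i,i)")
        case False
        then have "i \<notin> set idx" unfolding idx_def by simp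
        then show ?thesis using z_out that by simp
      qed simp
    qed (use idx_lt r0 in auto)
    finally show ?thesis unfolding z_def .
  qed
  then show ?thesis using X D unfolding positive_frame_def p by auto
qed

text \<open>Via the spectral theorem, both facts carry over to every symmetric matrix: the
  eigenvalue count is the maximal size of a positive frame.\<close>
lemma positive_frame_le_num_sign_eig:
  fixes A X :: "real mat"
  assumes A: "A \<in> carrier_mat n n" "A\<^sup>T = A" and frame: "positive_frame \<sigma> A k X"
  shows "k \<le> num_sign_eig \<sigma> A"
proof -
  obtain U where U: "orthonormal_mat n U" and diag: "diagonal_mat (U\<^sup>T * A * U)"
    using real_symmetric_spectral[OF A] by blast
  define D where "D = U\<^sup>T * A * U"
  have D: "D \<in> carrier_mat n n" using A orthonormal_matD[OF U] unfolding D_def by simp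
  have "A = (U\<^sup>T)\<^sup>T * D * U\<^sup>T"
    using orthonormal_congruence_inverse[OF U A(1)] unfolding D_def by simp
  then have "positive_frame \<sigma> D k (U\<^sup>T * X)"
    using positive_frame_congruence[OF D, of "U\<^sup>T"] frame orthonormal_matD[OF U] by simp
  then have "k \<le> length (filter (\<lambda>x. 0 < \<sigma> * x) (diag_mat D))"
    using positive_frame_diagonal_le[OF D] diag unfolding D_def by blast
  then show ?thesis using num_sign_eig_spectral[OF A(1) U diag] unfolding D_def by simp
qed

lemma positive_frame_exists:
  fixes A :: "real mat"
  assumes A: "A \<in> carrier_mat n n" "A\<^sup>T = A"
  shows "\<exists>X. positive_frame \<sigma> A (num_sign_eig \<sigma> A) X"
proof -
  obtain U where U: "orthonormal_mat n U" and diag: "diagonal_mat (U\<^sup>T * A * U)"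
    using real_symmetric_spectral[OF A] by blast
  have "U\<^sup>T * A * U \<in> carrier_mat n n" using A orthonormal_matD[OF U] by simp
  then obtain X where "positive_frame \<sigma> (U\<^sup>T * A * U) (num_sign_eig \<sigma> A) X"
    using positive_frame_diagonal_exists diag num_sign_eig_spectral[OF A(1) U diag] by metis
  then have "positive_frame \<sigma> A (num_sign_eig \<sigma> A) (U * X)"
    using positive_frame_congruence[OF A(1)] orthonormal_matD[OF U] by blast
  then show ?thesis ..
qed

text \<open>Sylvester's law of inertia, in the form of an inequality for arbitrary (possibly
  singular) congruences.\<close>
theorem num_sign_eig_congruence_le:
  fixes A P :: "real mat"
  assumes A: "A \<in> carrier_mat n n" "A\<^sup>T = A" and P: "P \<in> carrier_mat n n"
  shows "num_sign_eig \<sigma> (P\<^sup>T * A * P) \<le> num_sign_eig \<sigma> A"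
proof -
  have "P\<^sup>T * A * P \<in> carrier_mat n n" "(P\<^sup>T * A * P)\<^sup>T = P\<^sup>T * A * P"
    using A P congruence_symmetric[OF A P] by auto
  then obtain X where "positive_frame \<sigma> (P\<^sup>T * A * P) (num_sign_eig \<sigma> (P\<^sup>T * A * P)) X"
    using positive_frame_exists by blast
  then have "positive_frame \<sigma> A (num_sign_eig \<sigma> (P\<^sup>T * A * P)) (P * X)"
    by (rule positive_frame_congruence[OF A(1) P])
  then show ?thesis by (rule positive_frame_le_num_sign_eig[OF A])
qed

subsection \<open>Linear substitutions in binary forms\<close>

lemma poly_as_coeff_sum:
  fixes p :: "real poly"
  assumes "degree p \<le> N"
  shows "poly p y = (\<Sum>e\<le>N. coeff p e * y ^ e)"
proof -
  have "poly p y = poly (\<Sum>i\<le>N. monom (coeff p i) i) y"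
    using poly_as_sum_of_monoms'[OF assms] by simp
  then show ?thesis by (simp add: poly_sum poly_monom)
qed

lemma degree_linear_power: "degree ([:a, b:] ^ m :: real poly) \<le> m"
  using degree_power_le[of "[:a, b:]" m] by (simp add: le_trans)

lemma degree_linear_power_product:
  "degree ([:a, b:] ^ m * [:c, d:] ^ l :: real poly) \<le> m + l"
  using degree_mult_le[of "[:a, b:] ^ m" "[:c, d:] ^ l"] degree_linear_power[of a b m]
    degree_linear_power[of c d l] by linarith

text \<open>Dehomogenising at \<open>x = 1\<close> determines the coefficient sequence.\<close>
lemma binform_at_1: "binform s a 1 y = (\<Sum>j\<le>2*s. (real (2*s choose j) * a j) * y ^ j)"
  unfolding binform_def by (simp add: atLeast0AtMost)

lemma binform_coeffs_unique:
  assumes eq: "\<forall>y. binform s a 1 y = binform s a' 1 y" and k: "k \<le> 2*s"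
  shows "a k = a' k"
proof -
  have "\<forall>j\<le>2*s. real (2*s choose j) * a j = real (2*s choose j) * a' j"
    using eq unfolding binform_at_1 by (simp only: polyfun_eq_coeffs)
  then show ?thesis using k by simp
qed

definition power_form_coeffs :: "nat \<Rightarrow> real \<Rightarrow> real \<Rightarrow> nat \<Rightarrow> real" where
  "power_form_coeffs s c d j = c ^ (2*s - j) * d ^ j"

lemma binform_power_form: "binform s (power_form_coeffs s c d) x y = (c * x + d * y) ^ (2*s)"
proof -
  have "(c * x + d * y) ^ (2*s) = (\<Sum>k\<le>2*s. real (2*s choose k) * (d * y) ^ k * (c * x) ^ (2*s - k))"
    using binomial_ring[of "d * y" "c * x"] by (simp add: add.commute)
  also have "\<dots> = binform s (power_form_coeffs s c d) x y"
    unfolding binform_def power_form_coeffs_def atLeast0AtMost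
    by (intro sum.cong refl) (simp add: power_mult_distrib)
  finally show ?thesis by simp
qed

text \<open>The matrix of the linear map on coefficient sequences induced by the substitution
  \<open>(x, y) \<mapsto> (\<alpha> x + \<beta> y, \<gamma> x + \<delta> y)\<close>.\<close>
definition subst_coeff :: "nat \<Rightarrow> real \<Rightarrow> real \<Rightarrow> real \<Rightarrow> real \<Rightarrow> nat \<Rightarrow> nat \<Rightarrow> real" where
  "subst_coeff s \<alpha> \<beta> \<gamma> \<delta> k j =
     real (2*s choose j) * coeff ([:\<alpha>, \<beta>:] ^ (2*s - j) * [:\<gamma>, \<delta>:] ^ j) k / real (2*s choose k)"

lemma binform_subst_at_1:
  "binform s a (\<alpha> + \<beta> * y) (\<gamma> + \<delta> * y) =
   binform s (\<lambda>k. \<Sum>j\<le>2*s. a j * subst_coeff s \<alpha> \<beta> \<gamma> \<delta> k j) 1 y"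
proof -
  let ?R = "\<lambda>j. [:\<alpha>, \<beta>:] ^ (2*s - j) * [:\<gamma>, \<delta>:] ^ j"
  have "binform s a (\<alpha> + \<beta> * y) (\<gamma> + \<delta> * y) = (\<Sum>j\<le>2*s. real (2*s choose j) * a j * poly (?R j) y)"
    unfolding binform_def atLeast0AtMost by (intro sum.cong refl) (simp add: algebra_simps)
  also have "\<dots> = (\<Sum>j\<le>2*s. \<Sum>k\<le>2*s. real (2*s choose j) * a j * coeff (?R j) k * y ^ k)"
  proof (intro sum.cong refl)
    fix j assume "j \<in> {..2*s}"
    then have "poly (?R j) y = (\<Sum>k\<le>2*s. coeff (?R j) k * y ^ k)"
      using degree_linear_power_product[of \<alpha> \<beta> "2*s - j" \<gamma> \<delta> j] by (intro poly_as_coeff_sum) simp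
    then show "real (2*s choose j) * a j * poly (?R j) y
        = (\<Sum>k\<le>2*s. real (2*s choose j) * a j * coeff (?R j) k * y ^ k)"
      by (simp add: sum_distrib_left mult.assoc)
  qed
  also have "\<dots> = (\<Sum>k\<le>2*s. \<Sum>j\<le>2*s. real (2*s choose j) * a j * coeff (?R j) k * y ^ k)"
    by (rule sum.swap)
  also have "\<dots> = (\<Sum>k\<le>2*s. (real (2*s choose k) * (\<Sum>j\<le>2*s. a j * subst_coeff s \<alpha> \<beta> \<gamma> \<delta> k j)) * y ^ k)"
  proof (intro sum.cong refl)
    fix k assume "k \<in> {..2*s}"
    then have "real (2*s choose k) \<noteq> 0" by simp
    then show "(\<Sum>j\<le>2*s. real (2*s choose j) * a j * coeff (?R j) k * y ^ k)
        = real (2*s choose k) * (\<Sum>j\<le>2*s. a j * subst_coeff s \<alpha> \<beta> \<gamma> \<delta> k j) * y ^ k"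
      unfolding sum_distrib_left sum_distrib_right subst_coeff_def
      by (intro sum.cong refl) (simp add: field_simps)
  qed
  also have "\<dots> = binform s (\<lambda>k. \<Sum>j\<le>2*s. a j * subst_coeff s \<alpha> \<beta> \<gamma> \<delta> k j) 1 y"
    by (simp add: binform_at_1)
  finally show ?thesis .
qed

lemma binform_subst_coeffs:
  assumes "\<forall>x y. binform s b x y = binform s a (\<alpha> * x + \<beta> * y) (\<gamma> * x + \<delta> * y)"
    and "k \<le> 2*s"
  shows "b k = (\<Sum>j\<le>2*s. a j * subst_coeff s \<alpha> \<beta> \<gamma> \<delta> k j)"
proof (rule binform_coeffs_unique[OF _ assms(2)], rule allI)
  fix y
  have "binform s b 1 y = binform s a (\<alpha> + \<beta> * y) (\<gamma> + \<delta> * y)" using assms(1) by simp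
  then show "binform s b 1 y = binform s (\<lambda>k. \<Sum>j\<le>2*s. a j * subst_coeff s \<alpha> \<beta> \<gamma> \<delta> k j) 1 y"
    by (simp only: binform_subst_at_1)
qed

text \<open>Evaluating the substitution on the pure power \<open>(x + d y)\<^bsup>2s\<^esup>\<close> computes the generating
  polynomial of each row of \<open>subst_coeff\<close>.\<close>
lemma subst_coeff_generating:
  assumes "k \<le> 2*s"
  shows "(\<Sum>j\<le>2*s. d ^ j * subst_coeff s \<alpha> \<beta> \<gamma> \<delta> k j) = (\<alpha> + d * \<gamma>) ^ (2*s - k) * (\<beta> + d * \<delta>) ^ k"
proof -
  have "\<forall>x y. binform s (power_form_coeffs s (\<alpha> + d * \<gamma>) (\<beta> + d * \<delta>)) x y
       = binform s (power_form_coeffs s 1 d) (\<alpha> * x + \<beta> * y) (\<gamma> * x + \<delta> * y)"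
    by (simp add: binform_power_form algebra_simps)
  from binform_subst_coeffs[OF this assms] show ?thesis
    unfolding power_form_coeffs_def by (simp only: power_one mult_1_left)
qed

definition half_subst_coeff :: "nat \<Rightarrow> real \<Rightarrow> real \<Rightarrow> real \<Rightarrow> real \<Rightarrow> nat \<Rightarrow> nat \<Rightarrow> real" where
  "half_subst_coeff s \<alpha> \<beta> \<gamma> \<delta> i m = coeff ([:\<alpha>, \<gamma>:] ^ (s - i) * [:\<beta>, \<delta>:] ^ i) m"

lemma half_subst_coeff_generating:
  assumes "i \<le> s"
  shows "(\<Sum>m\<le>s. half_subst_coeff s \<alpha> \<beta> \<gamma> \<delta> i m * d ^ m) = (\<alpha> + d * \<gamma>) ^ (s - i) * (\<beta> + d * \<delta>) ^ i"
proof -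
  have "degree ([:\<alpha>, \<gamma>:] ^ (s - i) * [:\<beta>, \<delta>:] ^ i) \<le> s"
    using degree_linear_power_product[of \<alpha> \<gamma> "s - i" \<beta> \<delta> i] assms by simp
  then have "poly ([:\<alpha>, \<gamma>:] ^ (s - i) * [:\<beta>, \<delta>:] ^ i) d
      = (\<Sum>m\<le>s. half_subst_coeff s \<alpha> \<beta> \<gamma> \<delta> i m * d ^ m)"
    unfolding half_subst_coeff_def by (rule poly_as_coeff_sum)
  then show ?thesis by (simp add: algebra_simps)
qed

lemma sum_convolution:
  fixes f :: "nat \<Rightarrow> nat \<Rightarrow> real" and g :: "nat \<Rightarrow> real"
  shows "(\<Sum>m\<le>s. \<Sum>n\<le>s. f m n * g (m + n))
       = (\<Sum>j\<le>2*s. g j * (\<Sum>m\<le>s. \<Sum>n\<le>s. f m n * (if m + n = j then 1 else 0)))"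
proof -
  have "(\<Sum>j\<le>2*s. g j * (\<Sum>m\<le>s. \<Sum>n\<le>s. f m n * (if m + n = j then 1 else 0)))
      = (\<Sum>j\<le>2*s. \<Sum>m\<le>s. \<Sum>n\<le>s. f m n * (if m + n = j then g j else 0))"
    unfolding sum_distrib_left by (intro sum.cong refl) simp
  also have "\<dots> = (\<Sum>m\<le>s. \<Sum>j\<le>2*s. \<Sum>n\<le>s. f m n * (if m + n = j then g j else 0))"
    by (rule sum.swap)
  also have "\<dots> = (\<Sum>m\<le>s. \<Sum>n\<le>s. \<Sum>j\<le>2*s. f m n * (if m + n = j then g j else 0))"
    by (rule sum.cong[OF refl]) (rule sum.swap)
  also have "\<dots> = (\<Sum>m\<le>s. \<Sum>n\<le>s. f m n * g (m + n))"
  proof (intro sum.cong refl)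
    fix m n assume "m \<in> {..s}" "n \<in> {..s}"
    then have "m + n \<in> {..2*s}" by simp
    then show "(\<Sum>j\<le>2*s. f m n * (if m + n = j then g j else 0)) = f m n * g (m + n)"
      unfolding sum_distrib_left[symmetric] by (simp add: sum.delta)
  qed
  finally show ?thesis by simp
qed

text \<open>Row \<open>i + l\<close> of the substitution matrix, applied to a Hankel sequence, factors through
  rows \<open>i\<close> and \<open>l\<close> of \<open>N\<close>: the generating polynomials multiply.\<close>
lemma subst_coeff_factorization:
  assumes i: "i \<le> s" and l: "l \<le> s"
  shows "(\<Sum>j\<le>2*s. a j * subst_coeff s \<alpha> \<beta> \<gamma> \<delta> (i + l) j) =
         (\<Sum>m\<le>s. \<Sum>n\<le>s. half_subst_coeff s \<alpha> \<beta> \<gamma> \<delta> i m * half_subst_coeff s \<alpha> \<beta> \<gamma> \<delta> l n * a (m + n))"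
proof -
  let ?N = "half_subst_coeff s \<alpha> \<beta> \<gamma> \<delta>" and ?L = "subst_coeff s \<alpha> \<beta> \<gamma> \<delta> (i + l)"
  define \<psi> where "\<psi> j = (\<Sum>m\<le>s. \<Sum>n\<le>s. ?N i m * ?N l n * (if m + n = j then 1 else 0))" for j
  have generating: "(\<Sum>j\<le>2*s. ?L j * d ^ j) = (\<Sum>j\<le>2*s. \<psi> j * d ^ j)" for d :: real
  proof -
    have "(\<Sum>j\<le>2*s. ?L j * d ^ j) = (\<alpha> + d * \<gamma>) ^ (2*s - (i + l)) * (\<beta> + d * \<delta>) ^ (i + l)"
      using subst_coeff_generating[of "i + l" s d] i l by (simp add: mult.commute)
    also have "\<dots> = ((\<alpha> + d * \<gamma>) ^ (s - i) * (\<beta> + d * \<delta>) ^ i) * ((\<alpha> + d * \<gamma>) ^ (s - l) * (\<beta> + d * \<delta>) ^ l)"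
    proof -
      have "2*s - (i + l) = (s - i) + (s - l)" using i l by simp
      then show ?thesis by (simp add: power_add algebra_simps)
    qed
    also have "\<dots> = (\<Sum>m\<le>s. ?N i m * d ^ m) * (\<Sum>n\<le>s. ?N l n * d ^ n)"
      using half_subst_coeff_generating i l by simp
    also have "\<dots> = (\<Sum>m\<le>s. \<Sum>n\<le>s. ?N i m * ?N l n * d ^ (m + n))"
      by (simp add: sum_product power_add mult_ac)
    also have "\<dots> = (\<Sum>j\<le>2*s. \<psi> j * d ^ j)"
      using sum_convolution[of "\<lambda>m n. ?N i m * ?N l n" "\<lambda>j. d ^ j" s]
      unfolding \<psi>_def by (simp add: mult.commute)
    finally show ?thesis .
  qed
  then have "\<forall>j\<le>2*s. ?L j = \<psi> j" using polyfun_eq_coeffs[of ?L "2*s" \<psi>] by blast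
  then have "(\<Sum>j\<le>2*s. a j * ?L j) = (\<Sum>j\<le>2*s. a j * \<psi> j)" by simp
  also have "\<dots> = (\<Sum>m\<le>s. \<Sum>n\<le>s. ?N i m * ?N l n * a (m + n))"
    using sum_convolution[of "\<lambda>m n. ?N i m * ?N l n" a s] unfolding \<psi>_def by simp
  finally show ?thesis .
qed

definition half_subst_mat :: "nat \<Rightarrow> real \<Rightarrow> real \<Rightarrow> real \<Rightarrow> real \<Rightarrow> real mat" where
  "half_subst_mat s \<alpha> \<beta> \<gamma> \<delta> = mat (s+1) (s+1) (\<lambda>(i,m). half_subst_coeff s \<alpha> \<beta> \<gamma> \<delta> i m)"

lemma half_subst_mat_carrier: "half_subst_mat s \<alpha> \<beta> \<gamma> \<delta> \<in> carrier_mat (s+1) (s+1)"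
  by (simp add: half_subst_mat_def)

lemma catalecticant_carrier: "catalecticant s a \<in> carrier_mat (s+1) (s+1)"
  by (simp add: catalecticant_def)

lemma catalecticant_symmetric: "(catalecticant s a)\<^sup>T = catalecticant s a"
  by (rule eq_matI) (auto simp: catalecticant_def add.commute)

lemma catalecticant_subst:
  assumes "\<forall>x y. binform s b x y = binform s a (\<alpha> * x + \<beta> * y) (\<gamma> * x + \<delta> * y)"
  defines "N \<equiv> half_subst_mat s \<alpha> \<beta> \<gamma> \<delta>"
  shows "catalecticant s b = N * catalecticant s a * N\<^sup>T"
proof (rule eq_matI)
  let ?N = "half_subst_coeff s \<alpha> \<beta> \<gamma> \<delta>"
  fix i l assume "i < dim_row (N * catalecticant s a * N\<^sup>T)" "l < dim_col (N * catalecticant s a * N\<^sup>T)"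
  then have i: "i \<le> s" and l: "l \<le> s" by (auto simp: N_def half_subst_mat_def)
  have "catalecticant s b $$ (i, l) = b (i + l)"
    using i l by (simp add: catalecticant_def)
  also have "\<dots> = (\<Sum>m\<le>s. \<Sum>n\<le>s. ?N i m * ?N l n * a (m + n))"
    using binform_subst_coeffs[OF assms(1), of "i + l"] subst_coeff_factorization[OF i l] i l by simp
  also have "\<dots> = (\<Sum>n\<le>s. \<Sum>m\<le>s. ?N i m * ?N l n * a (m + n))"
    by (rule sum.swap)
  also have "\<dots> = (\<Sum>n\<le>s. (\<Sum>m\<le>s. ?N i m * a (m + n)) * ?N l n)"
    unfolding sum_distrib_right by (intro sum.cong refl) (simp add: mult_ac)
  also have "\<dots> = (N * catalecticant s a * N\<^sup>T) $$ (i, l)"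
    using i l
    by (simp add: N_def catalecticant_def half_subst_mat_def scalar_prod_def atLeast0LessThan
        lessThan_Suc_atMost)
  finally show "catalecticant s b $$ (i, l) = (N * catalecticant s a * N\<^sup>T) $$ (i, l)" .
qed (simp_all add: N_def catalecticant_def half_subst_mat_def)

lemma binform_inverse_subst:
  assumes det: "\<alpha> * \<delta> - \<beta> * \<gamma> \<noteq> 0"
    and subst: "\<forall>x y. binform s b x y = binform s a (\<alpha> * x + \<beta> * y) (\<gamma> * x + \<delta> * y)"
  defines "D \<equiv> \<alpha> * \<delta> - \<beta> * \<gamma>"
  shows "\<forall>x y. binform s a x y = binform s b (\<delta> / D * x + - \<beta> / D * y) (- \<gamma> / D * x + \<alpha> / D * y)"
proof (intro allI)
  fix x y :: real
  have D: "D \<noteq> 0" using det unfolding D_def .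
  have "\<alpha> * (\<delta> / D * x + - \<beta> / D * y) + \<beta> * (- \<gamma> / D * x + \<alpha> / D * y) = D * x / D"
    "\<gamma> * (\<delta> / D * x + - \<beta> / D * y) + \<delta> * (- \<gamma> / D * x + \<alpha> / D * y) = D * y / D"
    unfolding D_def by (simp_all add: algebra_simps add_divide_distrib diff_divide_distrib)
  then have "\<alpha> * (\<delta> / D * x + - \<beta> / D * y) + \<beta> * (- \<gamma> / D * x + \<alpha> / D * y) = x"
    "\<gamma> * (\<delta> / D * x + - \<beta> / D * y) + \<delta> * (- \<gamma> / D * x + \<alpha> / D * y) = y"
    using D by simp_all
  then show "binform s a x y = binform s b (\<delta> / D * x + - \<beta> / D * y) (- \<gamma> / D * x + \<alpha> / D * y)"
    using subst by simp
qed

lemma catalecticant_sign_le: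
  assumes "\<forall>x y. binform s b x y = binform s a (\<alpha> * x + \<beta> * y) (\<gamma> * x + \<delta> * y)"
  shows "num_sign_eig \<sigma> (catalecticant s b) \<le> num_sign_eig \<sigma> (catalecticant s a)"
proof -
  let ?N = "half_subst_mat s \<alpha> \<beta> \<gamma> \<delta>"
  have "catalecticant s b = (?N\<^sup>T)\<^sup>T * catalecticant s a * ?N\<^sup>T"
    using catalecticant_subst[OF assms] by simp
  then show ?thesis
    using num_sign_eig_congruence_le[OF catalecticant_carrier catalecticant_symmetric, of "?N\<^sup>T"]
      half_subst_mat_carrier by simp
qed

text \<open>Both signature components agree, since each count is bounded by the other.\<close>
theorem lemma2p8:
  fixes s :: nat and a b :: "nat \<Rightarrow> real" and \<alpha> \<beta> \<gamma> \<delta> :: real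
  assumes "s \<ge> 1"
    and "\<alpha> * \<delta> - \<beta> * \<gamma> \<noteq> 0"
    and "\<forall>x y. binform s b x y = binform s a (\<alpha> * x + \<beta> * y) (\<gamma> * x + \<delta> * y)"
  shows "signature (catalecticant s b) = signature (catalecticant s a)"
proof -
  have "num_sign_eig \<sigma> (catalecticant s b) \<le> num_sign_eig \<sigma> (catalecticant s a)" for \<sigma>
    by (rule catalecticant_sign_le[OF assms(3)])
  moreover have "num_sign_eig \<sigma> (catalecticant s a) \<le> num_sign_eig \<sigma> (catalecticant s b)" for \<sigma>
    by (rule catalecticant_sign_le[OF binform_inverse_subst[OF assms(2,3)]])
  ultimately show ?thesis
    unfolding signature_def num_pos_eig_sign num_neg_eig_sign by (simp add: antisym)
qed

end
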